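(* For every pair of equations $E,E'$ in the unknowns $x_1,\dots,x_n$ and every $1\le k<\ell\le n$, the polynomial $t_{k\ell}^{E,E'}$ contains at most $2(|E|_{x_k}+|E|_{x_\ell})$ minimal monomials.
   Context: An equation is a pair $E=(u,v)$ of words over $\{x_1,\dots,x_n\}$; $|E|_x=|u|_x+|v|_x$, the number of occurrences of $x$. For $E=(x_{i_1}\cdots x_{i_r},\,x_{j_1}\cdots x_{j_s})$, $S_{E,x_j}=\sum_{a:\,i_a=j}\prod_{t=1}^{a-1}X_{i_t}-\sum_{a:\,j_a=j}\prod_{t=1}^{a-1}X_{j_t}\in\mathbb Z[X_1,\dots,X_n]$ (empty product $=1$), and $t_{k\ell}^{E,E'}=S_{E,x_k}S_{E',x_\ell}-S_{E',x_k}S_{E,x_\ell}$. Writing a polynomial as $p=\sum_\beta c_\beta\mathbf X^\beta$ ($\mathbf X^\beta=\prod X_i^{(\beta)_i}$), a monomial $\mathbf X^\beta$ with $c_\beta\ne0$ is minimal in $p$ if no $\beta'\ne\beta$ with $c_{\beta'}\ne0$ satisfies $\beta'\le\beta$ componentwise; the number of minimal monomials is the number of such $\beta$. *)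

theory Defs
  imports Main "HOL-Library.Poly_Mapping"
begin

type_synonym mpoly = "(nat \<Rightarrow>\<^sub>0 nat) \<Rightarrow>\<^sub>0 int"

text \<open>A word over x_1..x_n is a list of variable indices; an equation is a pair of words.\<close>
type_synonym word = "nat list"
type_synonym equation = "word \<times> word"

definition Var :: "nat \<Rightarrow> mpoly" where
  "Var i = Poly_Mapping.single (Poly_Mapping.single i 1) 1"

definition occ :: "equation \<Rightarrow> nat \<Rightarrow> nat" where
  "occ E x = count_list (fst E) x + count_list (snd E) x"

definition Ssum :: "word \<Rightarrow> nat \<Rightarrow> mpoly" where
  "Ssum w j = (\<Sum>a<length w. if w ! a = j then prod_list (map Var (take a w)) else 0)"

definition S :: "equation \<Rightarrow> nat \<Rightarrow> mpoly" where
  "S E j = Ssum (fst E) j - Ssum (snd E) j"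

definition tpoly :: "equation \<Rightarrow> equation \<Rightarrow> nat \<Rightarrow> nat \<Rightarrow> mpoly" where
  "tpoly E E' k l = S E k * S E' l - S E' k * S E l"

definition le_cw :: "(nat \<Rightarrow>\<^sub>0 nat) \<Rightarrow> (nat \<Rightarrow>\<^sub>0 nat) \<Rightarrow> bool" where
  "le_cw \<beta>' \<beta> \<longleftrightarrow> (\<forall>i. Poly_Mapping.lookup \<beta>' i \<le> Poly_Mapping.lookup \<beta> i)"

definition minimal_monomials :: "mpoly \<Rightarrow> (nat \<Rightarrow>\<^sub>0 nat) set" where
  "minimal_monomials p =
     {\<beta> \<in> Poly_Mapping.keys p. \<not> (\<exists>\<beta>'\<in>Poly_Mapping.keys p. \<beta>' \<noteq> \<beta> \<and> le_cw \<beta>' \<beta>)}"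

end

theory Submission
  imports Defs
begin

text \<open>Every key of \<open>S E j\<close> is the exponent vector of a prefix of one side of \<open>E\<close> ending just
  before an occurrence of x_j. So every key of t_kl lies in a set {\<alpha> + \<gamma>_b | b}, where \<alpha> comes
  from such a prefix for an occurrence of x_k or x_l in \<open>E\<close> and \<gamma>_b ranges over the exponents
  of the prefixes of one side of \<open>E'\<close>. There are at most 2(|E|_x_k + |E|_x_l) such sets; each
  is a chain for the componentwise order and so contains at most one minimal monomial.\<close>

lemma card_minimal_monomials_le_chain_cover:
  assumes "finite I"
    and cover: "Poly_Mapping.keys p \<subseteq> (\<Union>i\<in>I. C i)"
    and chain: "\<And>i \<beta> \<beta>'. i \<in> I \<Longrightarrow> \<beta> \<in> C i \<Longrightarrow> \<beta>' \<in> C i \<Longrightarrow>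
      le_cw \<beta> \<beta>' \<or> le_cw \<beta>' \<beta>"
  shows "card (minimal_monomials p) \<le> card I"
proof -
  let ?M = "minimal_monomials p"
  have finite_M: "finite ?M"
    by (simp add: minimal_monomials_def)
  have at_most_one: "card (?M \<inter> C i) \<le> 1" if "i \<in> I" for i
  proof -
    have "\<beta> = \<beta>'" if "\<beta> \<in> ?M \<inter> C i" "\<beta>' \<in> ?M \<inter> C i" for \<beta> \<beta>'
      using that chain[OF \<open>i \<in> I\<close>, of \<beta> \<beta>'] by (auto simp: minimal_monomials_def)
    then show ?thesis
      using finite_M by (simp add: card_le_Suc0_iff_eq)
  qed
  have "?M \<subseteq> (\<Union>i\<in>I. ?M \<inter> C i)"
    using cover by (fastforce simp: minimal_monomials_def)
  then have "card ?M \<le> card (\<Union>i\<in>I. ?M \<inter> C i)"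
    using \<open>finite I\<close> finite_M by (intro card_mono) auto
  also have "\<dots> \<le> (\<Sum>i\<in>I. card (?M \<inter> C i))"
    using \<open>finite I\<close> by (rule card_UN_le)
  also have "\<dots> \<le> (\<Sum>i\<in>I. 1)"
    using at_most_one by (rule sum_mono)
  finally show ?thesis by simp
qed

definition word_exponent :: "word \<Rightarrow> (nat \<Rightarrow>\<^sub>0 nat)" where
  "word_exponent w = (\<Sum>i\<leftarrow>w. Poly_Mapping.single i 1)"

definition positions :: "word \<Rightarrow> nat set \<Rightarrow> nat set" where
  "positions w J = {a. a < length w \<and> w ! a \<in> J}"

lemma prod_list_map_Var: "prod_list (map Var w) = Poly_Mapping.single (word_exponent w) 1"
  by (induction w) (simp_all add: word_exponent_def Var_def mult_single)

lemma le_cw_add_left: "le_cw y z \<Longrightarrow> le_cw (x + y) (x + z)"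
  by (simp add: le_cw_def lookup_add)

lemma le_cw_word_exponent_take:
  assumes "a \<le> b"
  shows "le_cw (word_exponent (take a w)) (word_exponent (take b w))"
proof -
  have "take b w = take a w @ take (b - a) (drop a w)"
    using take_add[of a "b - a" w] assms by simp
  then show ?thesis by (simp add: le_cw_def word_exponent_def lookup_add)
qed

lemma finite_positions [simp]: "finite (positions w J)"
  by (simp add: positions_def)

lemma card_positions_doubleton:
  assumes "k \<noteq> l"
  shows "card (positions w {k, l}) = count_list w k + count_list w l"
proof -
  have "card (positions w {k, l}) = length (filter (\<lambda>x. x \<in> {k, l}) w)"
    by (simp add: positions_def length_filter_conv_card)
  also have "\<dots> = count_list w k + count_list w l"
    using assms by (induction w) auto
  finally show ?thesis .
qed

lemma keys_Ssum:
  "Poly_Mapping.keys (Ssum w j) \<subseteq> (\<lambda>a. word_exponent (take a w)) ` positions w {j}"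
proof -
  have "Poly_Mapping.keys (Ssum w j) \<subseteq>
      (\<Union>a<length w. Poly_Mapping.keys (if w ! a = j then prod_list (map Var (take a w)) else 0))"
    unfolding Ssum_def by (rule keys_sum)
  also have "\<dots> \<subseteq> (\<lambda>a. word_exponent (take a w)) ` positions w {j}"
    by (auto simp: prod_list_map_Var positions_def split: if_splits)
  finally show ?thesis .
qed

lemma keys_S:
  "Poly_Mapping.keys (S E j) \<subseteq>
     (\<Union>u\<in>{fst E, snd E}. (\<lambda>a. word_exponent (take a u)) ` positions u {j})"
proof -
  have "Poly_Mapping.keys (S E j) \<subseteq>
      Poly_Mapping.keys (Ssum (fst E) j) \<union> Poly_Mapping.keys (Ssum (snd E) j)"
    unfolding S_def by (rule keys_diff)
  also have "\<dots> \<subseteq> (\<Union>u\<in>{fst E, snd E}. (\<lambda>a. word_exponent (take a u)) ` positions u {j})"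
    using keys_Ssum[of "fst E" j] keys_Ssum[of "snd E" j] by auto
  finally show ?thesis .
qed

definition prefix_chain :: "(word \<times> nat) \<times> word \<Rightarrow> (nat \<Rightarrow>\<^sub>0 nat) set" where
  "prefix_chain c = (case c of ((u, a), w) \<Rightarrow>
     range (\<lambda>b. word_exponent (take a u) + word_exponent (take b w)))"

definition chain_index ::
    "equation \<Rightarrow> equation \<Rightarrow> nat \<Rightarrow> nat \<Rightarrow> ((word \<times> nat) \<times> word) set" where
  "chain_index E E' k l = (SIGMA u:{fst E, snd E}. positions u {k, l}) \<times> {fst E', snd E'}"

lemma prefix_chain_is_chain:
  assumes "\<beta> \<in> prefix_chain c" and "\<beta>' \<in> prefix_chain c"
  shows "le_cw \<beta> \<beta>' \<or> le_cw \<beta>' \<beta>"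
proof -
  obtain u a w b b' where \<beta>: "\<beta> = word_exponent (take a u) + word_exponent (take b w)"
    and \<beta>': "\<beta>' = word_exponent (take a u) + word_exponent (take b' w)"
    using assms by (auto simp: prefix_chain_def split: prod.splits)
  show ?thesis
  proof (cases "b \<le> b'")
    case True
    then show ?thesis
      unfolding \<beta> \<beta>' by (simp add: le_cw_add_left le_cw_word_exponent_take)
  next
    case False
    then show ?thesis
      unfolding \<beta> \<beta>' by (simp add: le_cw_add_left le_cw_word_exponent_take)
  qed
qed

lemma keys_tpoly_subset_prefix_chains:
  "Poly_Mapping.keys (tpoly E E' k l) \<subseteq> (\<Union>c\<in>chain_index E E' k l. prefix_chain c)"
proof
  fix \<beta> assume "\<beta> \<in> Poly_Mapping.keys (tpoly E E' k l)"
  then have "\<beta> \<in> Poly_Mapping.keys (S E k * S E' l) \<union> Poly_Mapping.keys (S E' k * S E l)"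
    using keys_diff[of "S E k * S E' l" "S E' k * S E l"] unfolding tpoly_def by blast
  then obtain j m x y where j: "j \<in> {k, l}" and x: "x \<in> Poly_Mapping.keys (S E j)"
    and y: "y \<in> Poly_Mapping.keys (S E' m)" and \<beta>: "\<beta> = x + y"
  proof
    assume "\<beta> \<in> Poly_Mapping.keys (S E k * S E' l)"
    then obtain x y where "x \<in> Poly_Mapping.keys (S E k)" "y \<in> Poly_Mapping.keys (S E' l)"
      "\<beta> = x + y"
      using keys_mult by blast
    then show ?thesis using that[where j = k and m = l] by simp
  next
    assume "\<beta> \<in> Poly_Mapping.keys (S E' k * S E l)"
    then obtain y x where "y \<in> Poly_Mapping.keys (S E' k)" "x \<in> Poly_Mapping.keys (S E l)"
      "\<beta> = y + x"
      using keys_mult by blast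
    then show ?thesis using that[where j = l and m = k] by (simp add: add.commute)
  qed
  obtain u a where u: "u \<in> {fst E, snd E}" and a: "a \<in> positions u {j}"
    and x_eq: "x = word_exponent (take a u)"
    using subsetD[OF keys_S x] by blast
  obtain w b where w: "w \<in> {fst E', snd E'}" and y_eq: "y = word_exponent (take b w)"
    using subsetD[OF keys_S y] by blast
  have "((u, a), w) \<in> chain_index E E' k l"
    using u a j w by (auto simp: chain_index_def positions_def)
  moreover have "\<beta> \<in> prefix_chain ((u, a), w)"
    using \<beta> x_eq y_eq by (auto simp: prefix_chain_def)
  ultimately show "\<beta> \<in> (\<Union>c\<in>chain_index E E' k l. prefix_chain c)"
    by blast
qed

lemma card_chain_index:
  assumes "k \<noteq> l"
  shows "card (chain_index E E' k l) \<le> 2 * (occ E k + occ E l)"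
proof -
  let ?P = "\<lambda>u. positions u {k, l}"
  have "(SIGMA u:{fst E, snd E}. ?P u) = {fst E} \<times> ?P (fst E) \<union> {snd E} \<times> ?P (snd E)"
    by auto
  then have "card (SIGMA u:{fst E, snd E}. ?P u) \<le> card (?P (fst E)) + card (?P (snd E))"
    using card_Un_le by (metis card_cartesian_product_singleton)
  also have "\<dots> = occ E k + occ E l"
    using assms by (simp add: card_positions_doubleton occ_def)
  finally have "card (SIGMA u:{fst E, snd E}. ?P u) \<le> occ E k + occ E l" .
  moreover have "card {fst E', snd E'} \<le> 2"
    by (simp add: card_insert_le_m1)
  ultimately show ?thesis
    unfolding chain_index_def card_cartesian_product
    by (metis mult.commute mult_le_mono)
qed

theorem lemma4p4:
  fixes n k l :: nat and E E' :: equation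
  assumes "set (fst E) \<subseteq> {1..n}" and "set (snd E) \<subseteq> {1..n}"
    and "set (fst E') \<subseteq> {1..n}" and "set (snd E') \<subseteq> {1..n}"
    and "1 \<le> k" and "k < l" and "l \<le> n"
  shows "card (minimal_monomials (tpoly E E' k l)) \<le> 2 * (occ E k + occ E l)"
proof -
  have finite_index: "finite (chain_index E E' k l)"
    by (simp add: chain_index_def)
  have "card (minimal_monomials (tpoly E E' k l)) \<le> card (chain_index E E' k l)"
    using finite_index keys_tpoly_subset_prefix_chains prefix_chain_is_chain
    by (rule card_minimal_monomials_le_chain_cover)
  also have "\<dots> \<le> 2 * (occ E k + occ E l)"
    using \<open>k < l\<close> by (intro card_chain_index) simp
  finally show ?thesis .
qed

end
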